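(* Let $\mathcal{X}$ and $\mathcal{Y}$ be finite sets with $2 \le |\mathcal{X}|,|\mathcal{Y}| < \infty$, and let $X\in\mathcal{X}$, $Y\in\mathcal{Y}$ be random variables with joint pmf $P_{X,Y}$ whose marginals satisfy $P_X(x)>0$ for all $x\in\mathcal{X}$ and $P_Y(y)>0$ for all $y\in\mathcal{Y}$. Let $W$ be the $|\mathcal{Y}|\times|\mathcal{X}|$ column stochastic matrix of the channel $P_{Y|X}$ (its $x$th column is $P_{Y|X=x}$). Suppose $f:(0,\infty)\to\mathbb{R}$ is convex, strictly convex and twice differentiable at $1$, with $f(1)=0$ and $f''(1)>0$. Then $$\eta_{\chi^2}(P_X,P_{Y|X}) = \lim_{\delta\to 0^+}\ \sup_{R_X\in\mathcal{P}_{\mathcal{X}}:\ 0<D_f(R_X\|P_X)\le\delta} \frac{D_f(WR_X\|WP_X)}{D_f(R_X\|P_X)}.$$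
   Context: $\mathcal{P}_{\mathcal{X}}$ denotes the set of pmfs on $\mathcal{X}$, viewed as column vectors; a channel $W$ maps $R_X$ to $WR_X\in\mathcal{P}_{\mathcal{Y}}$. For convex $f:(0,\infty)\to\mathbb{R}$, strictly convex at $1$ (i.e. $\lambda f(x)+(1-\lambda)f(y)>f(1)$ whenever $\lambda\in(0,1)$, $x,y>0$, $\lambda x+(1-\lambda)y=1$) with $f(1)=0$, the $f$-divergence is $D_f(R_X\|P_X)=\sum_{x}P_X(x)f(R_X(x)/P_X(x))$, with conventions $f(0)=\lim_{t\to0^+}f(t)$, $0f(0/0)=0$, and $0f(r/0)=r\lim_{p\to0^+}pf(1/p)$ for $r>0$. The $\chi^2$-divergence is the case $f(t)=t^2-1$: $\chi^2(R_X\|P_X)=\sum_x (R_X(x)-P_X(x))^2/P_X(x)$. The contraction coefficient is $\eta_f(P_X,P_{Y|X})=\sup\{D_f(WR_X\|WP_X)/D_f(R_X\|P_X): R_X\in\mathcal{P}_{\mathcal{X}},\ 0<D_f(R_X\|P_X)<\infty\}$ (defined to be $0$ if $X$ or $Y$ is almost surely constant), and $\eta_{\chi^2}$ denotes this coefficient for the $\chi^2$-divergence. *)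

theory Defs
  imports "HOL-Analysis.Analysis"
begin

definition pmf_vec :: "real^'n \<Rightarrow> bool" where
  "pmf_vec R \<longleftrightarrow> (\<forall>i. R$i \<ge> 0) \<and> (\<Sum>i\<in>UNIV. R$i) = 1"

definition f_zero :: "(real \<Rightarrow> real) \<Rightarrow> ereal" where
  "f_zero f = Lim (at_right 0) (\<lambda>t. ereal (f t))"

text \<open>Convention 0 f(r/0) = r lim_{p->0+} p f(1/p).\<close>
definition f_star :: "(real \<Rightarrow> real) \<Rightarrow> ereal" where
  "f_star f = Lim (at_right 0) (\<lambda>p. ereal (p * f (1 / p)))"

definition fdiv :: "(real \<Rightarrow> real) \<Rightarrow> real^'n \<Rightarrow> real^'n \<Rightarrow> ereal" where
  "fdiv f R P = (\<Sum>i\<in>UNIV.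
      if P$i = 0 then (if R$i = 0 then 0 else ereal (R$i) * f_star f)
      else if R$i = 0 then ereal (P$i) * f_zero f
      else ereal (P$i * f (R$i / P$i)))"

definition chi2 :: "real \<Rightarrow> real" where
  "chi2 t = t\<^sup>2 - 1"

text \<open>Contraction coefficient; 0 if X or Y is almost surely constant.\<close>
definition eta :: "(real \<Rightarrow> real) \<Rightarrow> real^'x \<Rightarrow> real^'x^'y \<Rightarrow> ereal" where
  "eta f P W = (if (\<exists>x. P$x = 1) \<or> (\<exists>y. (W *v P)$y = 1) then 0
     else Sup {fdiv f (W *v R) (W *v P) / fdiv f R P | R.
                 pmf_vec R \<and> 0 < fdiv f R P \<and> fdiv f R P < \<infinity>})"

definition strictly_convex_at_1 :: "(real \<Rightarrow> real) \<Rightarrow> bool" where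
  "strictly_convex_at_1 f \<longleftrightarrow>
     (\<forall>l x y. 0 < l \<and> l < 1 \<and> 0 < x \<and> 0 < y \<and> x \<noteq> y \<and> l * x + (1 - l) * y = 1
        \<longrightarrow> l * f x + (1 - l) * f y > f 1)"

end

theory Submission
  imports Defs
begin

text \<open>
  Near P, every f-divergence with f''(1) > 0 is f''(1)/2 times the chi-square divergence up to a
  factor 1 + o(1): a second-order Taylor expansion of f at 1 gives this as soon as all likelihood
  ratios R(x)/P(x) are close to 1, and the output ratios (W R)(y)/(W P)(y) are averages of the input
  ratios under the posterior P(x|y), so they are close to 1 as well. Conversely, convexity makes
  f(t) - f'(1)(t - 1) bounded away from 0 when t is away from 1, so a small D_f(R||P) forces all
  ratios close to 1. Hence for small delta every ratio in the supremum is at most (1 + O(eps)) times a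
  chi-square ratio; and it comes within a factor 1 - O(eps) of any chi-square ratio by moving R
  towards P along P + t (R - P), which scales both chi-square divergences by t^2.
\<close>

lemma second_order_taylor_bound:
  fixes f :: "real \<Rightarrow> real"
  assumes diff: "\<exists>e>0. \<forall>t. \<bar>t - c\<bar> < e \<longrightarrow> f differentiable (at t)"
    and diff2: "deriv f differentiable (at c)" and \<epsilon>: "\<epsilon> > 0"
  obtains \<rho> where "\<rho> > 0" and "\<And>u. \<bar>u\<bar> < \<rho> \<Longrightarrow>
     \<bar>f (c + u) - f c - deriv f c * u - deriv (deriv f) c / 2 * u\<^sup>2\<bar> \<le> \<epsilon> * u\<^sup>2"
proof -
  obtain e where e: "e > 0" "\<And>t. \<bar>t - c\<bar> < e \<Longrightarrow> f differentiable (at t)"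
    using diff by blast
  define D where "D = deriv (deriv f) c"
  have "(deriv f has_real_derivative D) (at c)"
    using diff2 unfolding D_def by (simp add: DERIV_deriv_iff_real_differentiable)
  then have lim: "((\<lambda>h. (deriv f (c + h) - deriv f c) / h) \<longlongrightarrow> D) (at 0)"
    by (simp add: DERIV_def)
  obtain d where d: "d > 0" "\<And>h. h \<noteq> 0 \<Longrightarrow> \<bar>h\<bar> < d \<Longrightarrow>
      \<bar>(deriv f (c + h) - deriv f c) / h - D\<bar> < \<epsilon>"
    using LIM_D[OF lim \<epsilon>] by (auto simp: dist_real_def)
  have deriv_bound: "\<bar>deriv f (c + h) - deriv f c - D * h\<bar> \<le> \<epsilon> * \<bar>h\<bar>" if "\<bar>h\<bar> < d" for h
  proof (cases "h = 0")
    case False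
    have "(deriv f (c + h) - deriv f c) / h - D = (deriv f (c + h) - deriv f c - D * h) / h"
      using False by (simp add: field_simps)
    then have "\<bar>deriv f (c + h) - deriv f c - D * h\<bar> / \<bar>h\<bar> < \<epsilon>"
      using d(2)[OF False that] by (simp add: abs_divide)
    then show ?thesis using False by (simp add: divide_less_eq less_imp_le)
  qed simp
  define \<rho> where "\<rho> = min d e"
  define r where "r = (\<lambda>s. f (c + s) - f c - deriv f c * s - D / 2 * s\<^sup>2)"
  define r' where "r' = (\<lambda>s. deriv f (c + s) - deriv f c - D * s)"
  have r_deriv: "(r has_real_derivative r' s) (at s)" if "\<bar>s\<bar> < \<rho>" for s
  proof -
    have "(f has_real_derivative deriv f (c + s)) (at (c + s))"
      using e that by (simp add: \<rho>_def DERIV_deriv_iff_real_differentiable)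
    then have "((\<lambda>s. f (c + s)) has_real_derivative deriv f (c + s)) (at s)"
      using DERIV_shift[of f "deriv f (c + s)" s c] by (simp add: add.commute)
    then show ?thesis
      unfolding r_def r'_def by (auto intro!: derivative_eq_intros simp: power2_eq_square)
  qed
  have "r 0 = 0" by (simp add: r_def)
  have "\<bar>r u\<bar> \<le> \<epsilon> * u\<^sup>2" if u: "\<bar>u\<bar> < \<rho>" for u
  proof (cases "u = 0")
    case False
    obtain z where z: "min 0 u < z" "z < max 0 u"
      and mvt: "r (max 0 u) - r (min 0 u) = (max 0 u - min 0 u) * r' z"
      using MVT2[of "min 0 u" "max 0 u" r r'] False r_deriv u by fastforce
    have zu: "\<bar>z\<bar> \<le> \<bar>u\<bar>" using z by auto
    have "\<bar>r u\<bar> = \<bar>u\<bar> * \<bar>r' z\<bar>"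
      using mvt False \<open>r 0 = 0\<close> by (cases "u > 0") (auto simp: abs_mult)
    also have "\<dots> \<le> \<bar>u\<bar> * (\<epsilon> * \<bar>u\<bar>)"
      using deriv_bound[of z] zu u \<epsilon> unfolding r'_def \<rho>_def
      by (intro mult_left_mono) (auto intro: order_trans[OF _ mult_left_mono[OF zu]])
    also have "\<dots> = \<epsilon> * u\<^sup>2" by (simp add: power2_eq_square)
    finally show ?thesis .
  qed (simp add: \<open>r 0 = 0\<close>)
  moreover have "\<rho> > 0" using d e by (simp add: \<rho>_def)
  ultimately show ?thesis using that unfolding r_def D_def by blast
qed

lemma weighted_mean_square_le:
  fixes w u :: "'a \<Rightarrow> real"
  assumes "finite A" "\<And>i. i \<in> A \<Longrightarrow> w i \<ge> 0" "(\<Sum>i\<in>A. w i) = 1"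
  shows "(\<Sum>i\<in>A. w i * u i)\<^sup>2 \<le> (\<Sum>i\<in>A. w i * (u i)\<^sup>2)"
proof -
  define M where "M = (\<Sum>i\<in>A. w i * u i)"
  have "0 \<le> (\<Sum>i\<in>A. w i * (u i - M)\<^sup>2)" using assms by (intro sum_nonneg) auto
  also have "\<dots> = (\<Sum>i\<in>A. w i * (u i)\<^sup>2 - 2 * M * (w i * u i) + M\<^sup>2 * w i)"
    by (rule sum.cong) (auto simp: power2_eq_square algebra_simps)
  also have "\<dots> = (\<Sum>i\<in>A. w i * (u i)\<^sup>2) - M\<^sup>2"
    unfolding sum.distrib sum_subtractf sum_distrib_left[symmetric] M_def[symmetric] assms(3)
    by (simp add: power2_eq_square)
  finally show ?thesis unfolding M_def by simp
qed

lemma weighted_mean_abs_le: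
  fixes w u :: "'a \<Rightarrow> real"
  assumes "finite A" "\<And>i. i \<in> A \<Longrightarrow> w i \<ge> 0" "(\<Sum>i\<in>A. w i) = 1"
    and "\<And>i. i \<in> A \<Longrightarrow> \<bar>u i\<bar> \<le> B"
  shows "\<bar>\<Sum>i\<in>A. w i * u i\<bar> \<le> B"
proof -
  have "\<bar>\<Sum>i\<in>A. w i * u i\<bar> \<le> (\<Sum>i\<in>A. w i * B)"
    using assms by (intro order_trans[OF sum_abs sum_mono]) (auto simp: abs_mult intro: mult_left_mono)
  also have "\<dots> = B" using assms(3) by (simp add: sum_distrib_right[symmetric])
  finally show ?thesis .
qed

lemma quotient_bounds_of_relative_errors:
  fixes e a cX cY DX DY :: real
  assumes e: "0 < e" "e \<le> 1/2" and a: "a > 0" and cX: "cX > 0" and cY: "cY \<ge> 0"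
    and hX: "\<bar>DX - a * cX\<bar> \<le> e * (a * cX)" and hY: "\<bar>DY - a * cY\<bar> \<le> e * (a * cY)"
  shows "DX > 0" "DY / DX \<le> (1 + 4 * e) * (cY / cX)" "(1 - 2 * e) * (cY / cX) \<le> DY / DX"
proof -
  have acX: "a * cX > 0" and acY: "a * cY \<ge> 0" using a cX cY by auto
  have DX: "(1 - e) * (a * cX) \<le> DX" "DX \<le> (1 + e) * (a * cX)"
    using hX by (auto simp: abs_le_iff algebra_simps)
  have DY: "(1 - e) * (a * cY) \<le> DY" "DY \<le> (1 + e) * (a * cY)"
    using hY by (auto simp: abs_le_iff algebra_simps)
  have low_pos: "(1 - e) * (a * cX) > 0" using e acX by simp
  then show DX_pos: "DX > 0" using DX(1) by linarith
  have "DY / DX \<le> (1 + e) * (a * cY) / ((1 - e) * (a * cX))"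
    using DY(2) DX(1) DX_pos low_pos e acY
    by (intro order_trans[OF divide_right_mono divide_left_mono]) auto
  also have "\<dots> = (1 + e) / (1 - e) * (cY / cX)" using a by simp
  also have "\<dots> \<le> (1 + 4 * e) * (cY / cX)"
  proof (rule mult_right_mono)
    have "e * e \<le> e * (1/2)" using e by (intro mult_left_mono) auto
    then have "1 + e \<le> (1 + 4 * e) * (1 - e)" by (simp add: algebra_simps)
    then show "(1 + e) / (1 - e) \<le> 1 + 4 * e" using e by (simp add: divide_le_eq)
  qed (use cX cY in simp)
  finally show "DY / DX \<le> (1 + 4 * e) * (cY / cX)" .
  have "(1 - 2 * e) * (cY / cX) \<le> (1 - e) / (1 + e) * (cY / cX)"
  proof (rule mult_right_mono)
    have "(1 - 2 * e) * (1 + e) \<le> 1 - e" using e by (simp add: algebra_simps)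
    then show "1 - 2 * e \<le> (1 - e) / (1 + e)" using e by (simp add: le_divide_eq)
  qed (use cX cY in simp)
  also have "\<dots> = (1 - e) * (a * cY) / ((1 + e) * (a * cX))" using a by simp
  also have "\<dots> \<le> DY / DX"
    using DY(1) DX(2) DX_pos e acY
    by (intro order_trans[OF divide_left_mono divide_right_mono]) auto
  finally show "(1 - 2 * e) * (cY / cX) \<le> DY / DX" .
qed

lemma pos_component_less_one:
  fixes V :: "real^'n"
  assumes "CARD('n) \<ge> 2" "\<And>i. V$i > 0" "(\<Sum>i\<in>UNIV. V$i) = 1"
  shows "V$i < 1"
proof -
  have "UNIV \<noteq> {i}"
  proof
    assume "UNIV = {i}"
    then have "CARD('n) = card {i}" by (simp only:)
    then show False using assms(1) by simp
  qed
  then obtain j where "j \<noteq> i" by blast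
  then have "V$i + V$j \<le> (\<Sum>k\<in>UNIV. V$k)"
    using assms(2) by (intro order_trans[OF _ sum_mono2[of UNIV "{i, j}"]]) (auto intro: less_imp_le)
  then show ?thesis using assms(2)[of j] assms(3) by simp
qed

lemma small_scale_exists:
  fixes c :: "'a::finite \<Rightarrow> real" and K \<rho> \<delta> :: real
  assumes "\<rho> > 0" and "\<delta> > 0"
  obtains t where "0 < t" "t \<le> 1" "\<And>x. t * c x < \<rho>" "K * t\<^sup>2 < \<delta>"
proof -
  have lim: "((\<lambda>t. a * t ^ k) \<longlongrightarrow> 0) (at_right 0)" if "k > 0" for a :: real and k :: nat
  proof -
    have "((\<lambda>t. a * t ^ k) \<longlongrightarrow> a * 0 ^ k) (at_right 0)" by (intro tendsto_intros)
    then show ?thesis using that by (simp add: power_0_left)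
  qed
  have "\<forall>\<^sub>F t in at_right 0. c x * t ^ 1 < \<rho>" for x
    using lim \<open>\<rho> > 0\<close> by (rule order_tendstoD(2)) simp
  then have ev_c: "\<forall>\<^sub>F t in at_right 0. \<forall>x. t * c x < \<rho>"
    by (intro eventually_all_finite) (simp add: mult.commute)
  have ev_K: "\<forall>\<^sub>F t in at_right 0. K * t\<^sup>2 < \<delta>"
    using lim \<open>\<delta> > 0\<close> by (rule order_tendstoD(2)) simp
  have ev_01: "\<forall>\<^sub>F t in at_right 0. 0 < t \<and> t \<le> (1::real)"
    unfolding eventually_at_right_field by (intro exI[of _ 1]) auto
  have "\<forall>\<^sub>F t in at_right 0. (\<forall>x. t * c x < \<rho>) \<and> K * t\<^sup>2 < \<delta> \<and> 0 < t \<and> t \<le> 1"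
    using eventually_conj[OF ev_c eventually_conj[OF ev_K ev_01]] .
  then have "\<exists>t. (\<forall>x. t * c x < \<rho>) \<and> K * t\<^sup>2 < \<delta> \<and> 0 < t \<and> t \<le> 1"
    by (rule eventually_happens'[OF trivial_limit_at_right_real])
  then show ?thesis using that by blast
qed

section \<open>The chi-square divergence as a quadratic form\<close>

definition chi2_form :: "real^'n \<Rightarrow> real^'n \<Rightarrow> real" where
  "chi2_form R P = (\<Sum>i\<in>UNIV. P$i * (R$i / P$i - 1)\<^sup>2)"

lemma fdiv_eq_sum_if_pos:
  fixes R P :: "real^'n"
  assumes "\<And>i. P$i > 0" "\<And>i. R$i > 0"
  shows "fdiv f R P = ereal (\<Sum>i\<in>UNIV. P$i * f (R$i / P$i))"
  unfolding fdiv_def using assms by (simp add: less_imp_neq[symmetric])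

lemma f_zero_chi2: "f_zero chi2 = ereal (-1)"
proof -
  have "((\<lambda>t. ereal (chi2 t)) \<longlongrightarrow> ereal (chi2 0)) (at_right 0)"
    unfolding chi2_def by (intro tendsto_intros)
  then show ?thesis unfolding f_zero_def by (intro tendsto_Lim) (auto simp: chi2_def)
qed

lemma fdiv_chi2_eq_chi2_form:
  fixes R P :: "real^'n"
  assumes P: "\<And>i. P$i > 0" and R: "\<And>i. R$i \<ge> 0"
    and sum: "(\<Sum>i\<in>UNIV. R$i) = (\<Sum>i\<in>UNIV. P$i)"
  shows "fdiv chi2 R P = ereal (chi2_form R P)"
proof -
  have term_eq: "(if P$i = 0 then (if R$i = 0 then 0 else ereal (R$i) * f_star chi2)
      else if R$i = 0 then ereal (P$i) * f_zero chi2
      else ereal (P$i * chi2 (R$i / P$i))) = ereal (P$i * (R$i / P$i - 1)\<^sup>2 + 2 * (R$i - P$i))" for i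
    using P[of i] by (auto simp: f_zero_chi2 chi2_def power2_eq_square field_simps)
  have "fdiv chi2 R P = ereal (\<Sum>i\<in>UNIV. P$i * (R$i / P$i - 1)\<^sup>2 + 2 * (R$i - P$i))"
    unfolding fdiv_def term_eq by simp
  also have "\<dots> = ereal (chi2_form R P)"
    using sum by (simp add: chi2_form_def sum.distrib sum_subtractf sum_distrib_left[symmetric])
  finally show ?thesis .
qed

lemma ratio_mix:
  fixes R P :: "real^'n"
  assumes "P$i \<noteq> 0"
  shows "(P + t *\<^sub>R (R - P))$i / P$i - 1 = t * (R$i / P$i - 1)"
  using assms by (simp add: field_simps)

lemma chi2_form_mix:
  fixes R P :: "real^'n"
  assumes "\<And>i. P$i \<noteq> 0"
  shows "chi2_form (P + t *\<^sub>R (R - P)) P = t\<^sup>2 * chi2_form R P"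
  unfolding chi2_form_def ratio_mix[OF assms]
  by (simp add: sum_distrib_left power_mult_distrib ac_simps)

lemma pmf_vec_mix:
  assumes "pmf_vec P" "pmf_vec R" "0 \<le> t" "t \<le> 1"
  shows "pmf_vec (P + t *\<^sub>R (R - P))"
proof -
  have "(P + t *\<^sub>R (R - P))$i = (1 - t) * P$i + t * R$i" for i
    by (simp add: algebra_simps)
  then show ?thesis
    using assms by (auto simp: pmf_vec_def sum.distrib sum_distrib_left[symmetric])
qed

lemma sum_taylor_remainder_bound:
  fixes Q u :: "'a \<Rightarrow> real" and f :: "real \<Rightarrow> real"
  assumes "finite A" "\<And>i. i \<in> A \<Longrightarrow> Q i \<ge> 0" "(\<Sum>i\<in>A. Q i * u i) = 0"
    and taylor: "\<And>i. i \<in> A \<Longrightarrow> \<bar>f (1 + u i) - f 1 - c * u i - a * (u i)\<^sup>2\<bar> \<le> e * (u i)\<^sup>2"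
  shows "\<bar>(\<Sum>i\<in>A. Q i * (f (1 + u i) - f 1)) - a * (\<Sum>i\<in>A. Q i * (u i)\<^sup>2)\<bar>
    \<le> e * (\<Sum>i\<in>A. Q i * (u i)\<^sup>2)"
proof -
  have "(\<Sum>i\<in>A. Q i * (f (1 + u i) - f 1)) - a * (\<Sum>i\<in>A. Q i * (u i)\<^sup>2)
      = (\<Sum>i\<in>A. Q i * (f (1 + u i) - f 1 - c * u i - a * (u i)\<^sup>2)) + c * (\<Sum>i\<in>A. Q i * u i)"
    by (simp add: sum.distrib sum_subtractf sum_distrib_left algebra_simps)
  also have "\<dots> = (\<Sum>i\<in>A. Q i * (f (1 + u i) - f 1 - c * u i - a * (u i)\<^sup>2))"
    using assms(3) by simp
  finally have "\<bar>(\<Sum>i\<in>A. Q i * (f (1 + u i) - f 1)) - a * (\<Sum>i\<in>A. Q i * (u i)\<^sup>2)\<bar>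
      \<le> (\<Sum>i\<in>A. Q i * (e * (u i)\<^sup>2))"
    using assms(2) taylor
    by (auto simp: abs_mult intro!: order_trans[OF sum_abs sum_mono] mult_left_mono)
  also have "\<dots> = e * (\<Sum>i\<in>A. Q i * (u i)\<^sup>2)" by (simp add: sum_distrib_left algebra_simps)
  finally show ?thesis .
qed

lemma fdiv_near_quadratic:
  fixes R P :: "real^'n"
  assumes P: "\<And>i. P$i > 0" and sum: "(\<Sum>i\<in>UNIV. R$i) = (\<Sum>i\<in>UNIV. P$i)"
    and f_1: "f 1 = 0" and "\<rho> \<le> 1" and near: "\<And>i. \<bar>R$i / P$i - 1\<bar> < \<rho>"
    and taylor: "\<And>u. \<bar>u\<bar> < \<rho> \<Longrightarrow> \<bar>f (1 + u) - f 1 - c * u - a * u\<^sup>2\<bar> \<le> e * u\<^sup>2"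
  obtains D where "fdiv f R P = ereal D" "\<bar>D - a * chi2_form R P\<bar> \<le> e * chi2_form R P"
proof -
  define u where "u i = R$i / P$i - 1" for i
  have R_eq: "R$i = P$i * (1 + u i)" for i
    using P[of i] by (simp add: u_def field_simps)
  have "R$i > 0" for i
    using near[of i] \<open>\<rho> \<le> 1\<close> P[of i] by (simp add: R_eq abs_less_iff)
  then have "fdiv f R P = ereal (\<Sum>i\<in>UNIV. P$i * f (1 + u i))"
    using fdiv_eq_sum_if_pos[OF P] by (simp add: u_def)
  moreover have "\<bar>(\<Sum>i\<in>UNIV. P$i * (f (1 + u i) - f 1)) - a * (\<Sum>i\<in>UNIV. P$i * (u i)\<^sup>2)\<bar>
      \<le> e * (\<Sum>i\<in>UNIV. P$i * (u i)\<^sup>2)"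
  proof (rule sum_taylor_remainder_bound)
    show "(\<Sum>i\<in>UNIV. P$i * u i) = 0"
      using sum by (simp add: R_eq algebra_simps sum.distrib)
    show "\<bar>f (1 + u i) - f 1 - c * u i - a * (u i)\<^sup>2\<bar> \<le> e * (u i)\<^sup>2" for i
      using taylor[of "u i"] near[of i] by (simp add: u_def)
  qed (use P in \<open>auto simp: less_imp_le\<close>)
  moreover have "chi2_form R P = (\<Sum>i\<in>UNIV. P$i * (u i)\<^sup>2)"
    by (simp add: chi2_form_def u_def)
  ultimately show ?thesis using that f_1 by simp
qed

section \<open>Generators of f-divergences with positive curvature at 1\<close>

locale fdiv_generator =
  fixes f :: "real \<Rightarrow> real"
  assumes convex: "convex_on {0<..} f"
    and f_1: "f 1 = 0"
    and differentiable_near_1: "\<exists>e>0. \<forall>t. \<bar>t - 1\<bar> < e \<longrightarrow> f differentiable (at t)"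
    and deriv_differentiable_1: "deriv f differentiable (at 1)"
    and deriv2_pos: "deriv (deriv f) 1 > 0"
begin

definition tangent_gap :: "real \<Rightarrow> real" where
  "tangent_gap t = f t - deriv f 1 * (t - 1)"

lemma tangent_gap_nonneg:
  assumes "t > 0"
  shows "tangent_gap t \<ge> 0"
proof -
  have "f differentiable (at 1)" using differentiable_near_1 by auto
  then have "(f has_field_derivative deriv f 1) (at 1 within {0<..})"
    by (simp add: DERIV_deriv_iff_real_differentiable has_field_derivative_at_within)
  then have "f t - f 1 \<ge> deriv f 1 * (t - 1)"
    using assms by (intro convex_on_imp_above_tangent[OF convex])
      (auto simp: interior_open intro: convex_connected)
  then show ?thesis by (simp add: tangent_gap_def f_1)
qed

lemma tangent_gap_shrink:
  assumes "0 \<le> l" "l \<le> 1" "x > 0"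
  shows "tangent_gap (1 + l * (x - 1)) \<le> l * tangent_gap x"
proof -
  have "f ((1 - l) *\<^sub>R 1 + l *\<^sub>R x) \<le> (1 - l) * f 1 + l * f x"
    by (rule convex_onD[OF convex]) (use assms in auto)
  then show ?thesis by (simp add: tangent_gap_def f_1 algebra_simps)
qed

lemma tangent_gap_quadratic_near_1:
  obtains \<rho> where "\<rho> > 0"
    and "\<And>u. \<bar>u\<bar> < \<rho> \<Longrightarrow> tangent_gap (1 + u) \<ge> deriv (deriv f) 1 / 4 * u\<^sup>2"
proof -
  obtain \<rho> where "\<rho> > 0" and taylor: "\<And>u. \<bar>u\<bar> < \<rho> \<Longrightarrow>
      \<bar>f (1 + u) - f 1 - deriv f 1 * u - deriv (deriv f) 1 / 2 * u\<^sup>2\<bar> \<le> deriv (deriv f) 1 / 4 * u\<^sup>2"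
    using second_order_taylor_bound[OF differentiable_near_1 deriv_differentiable_1, of "deriv (deriv f) 1 / 4"]
      deriv2_pos by auto
  have "tangent_gap (1 + u) \<ge> deriv (deriv f) 1 / 4 * u\<^sup>2" if "\<bar>u\<bar> < \<rho>" for u
  proof -
    have "tangent_gap (1 + u) = f (1 + u) - f 1 - deriv f 1 * u" by (simp add: tangent_gap_def f_1)
    then show ?thesis using taylor[OF that] unfolding abs_le_iff by linarith
  qed
  with \<open>\<rho> > 0\<close> show ?thesis using that by blast
qed

lemma tangent_gap_away_from_1:
  obtains \<rho>0 where "\<rho>0 > 0" and "\<And>\<rho> t. 0 < \<rho> \<Longrightarrow> \<rho> < \<rho>0 \<Longrightarrow> t > 0 \<Longrightarrow> \<bar>t - 1\<bar> \<ge> \<rho> \<Longrightarrow>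
      tangent_gap t \<ge> deriv (deriv f) 1 / 4 * \<rho>\<^sup>2"
proof -
  obtain \<rho>0 where "\<rho>0 > 0"
    and near: "\<And>u. \<bar>u\<bar> < \<rho>0 \<Longrightarrow> tangent_gap (1 + u) \<ge> deriv (deriv f) 1 / 4 * u\<^sup>2"
    using tangent_gap_quadratic_near_1 by blast
  have "tangent_gap t \<ge> deriv (deriv f) 1 / 4 * \<rho>\<^sup>2"
    if \<rho>: "0 < \<rho>" "\<rho> < \<rho>0" and t: "t > 0" "\<bar>t - 1\<bar> \<ge> \<rho>" for \<rho> t
  proof -
    \<comment> \<open>Shrink t towards 1 until it is at distance exactly \<rho>, where the quadratic bound applies.\<close>
    define l where "l = \<rho> / \<bar>t - 1\<bar>"
    have l: "0 < l" "l \<le> 1" using \<rho> t by (auto simp: l_def)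
    have "\<bar>l * (t - 1)\<bar> = \<rho>" using \<rho> t by (simp add: l_def abs_mult)
    then have "deriv (deriv f) 1 / 4 * \<rho>\<^sup>2 \<le> tangent_gap (1 + l * (t - 1))"
      using near[of "l * (t - 1)"] \<rho> by (metis power2_abs)
    also have "\<dots> \<le> l * tangent_gap t" using l t by (intro tangent_gap_shrink) auto
    also have "\<dots> \<le> tangent_gap t" using l tangent_gap_nonneg[OF t(1)] by (simp add: mult_left_le_one_le)
    finally show ?thesis .
  qed
  with \<open>\<rho>0 > 0\<close> show ?thesis using that by blast
qed

lemma tangent_gap_antimono_below_1:
  assumes "0 < s" "s \<le> t" "t < 1"
  shows "tangent_gap t \<le> tangent_gap s"
proof -
  define l where "l = (1 - t) / (1 - s)"
  have l: "0 \<le> l" "l \<le> 1" using assms by (auto simp: l_def field_simps)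
  have "1 + l * (s - 1) = t" using assms by (simp add: l_def field_simps)
  then have "tangent_gap t \<le> l * tangent_gap s"
    using tangent_gap_shrink[OF l \<open>0 < s\<close>] by simp
  also have "\<dots> \<le> tangent_gap s"
    using l tangent_gap_nonneg[OF \<open>0 < s\<close>] by (simp add: mult_left_le_one_le)
  finally show ?thesis .
qed

lemma f_tendsto_f_zero: "((\<lambda>t. ereal (f t)) \<longlongrightarrow> f_zero f) (at_right 0)"
proof -
  \<comment> \<open>The tangent gap is antitone on (0, 1) and nonnegative, so it has a limit at 0 in the
    extended reals; capping t at 1/2 makes the monotonicity hold on all of (0, \<infinity>).\<close>
  define k where "k t = ereal (- tangent_gap (min t (1/2)))" for t
  have "(k \<longlongrightarrow> Inf (k ` ({0<..} \<inter> UNIV))) (at 0 within ({0<..} \<inter> UNIV))"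
  proof (rule Lim_right_bound[where K = "-\<infinity>"])
    fix a b :: real assume "0 < a" "a \<le> b"
    then have "tangent_gap (min b (1/2)) \<le> tangent_gap (min a (1/2))"
      by (intro tangent_gap_antimono_below_1) auto
    then show "k a \<le> k b" by (simp add: k_def)
  qed simp
  then obtain L where "(k \<longlongrightarrow> L) (at_right 0)" by auto
  moreover have "\<forall>\<^sub>F t in at_right 0. k t = ereal (- tangent_gap t)"
    unfolding k_def eventually_at_right_field by (rule exI[of _ "1/2"]) auto
  ultimately have "((\<lambda>t. - ereal (tangent_gap t)) \<longlongrightarrow> L) (at_right 0)"
    using tendsto_cong by force
  then have gap_lim: "((\<lambda>t. ereal (tangent_gap t)) \<longlongrightarrow> - L) (at_right 0)"
    using tendsto_uminus_ereal by fastforce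
  have "\<forall>\<^sub>F t in at_right 0. ereal 0 \<le> ereal (tangent_gap t)"
    unfolding eventually_at_right_field by (rule exI[of _ 1]) (auto intro: tangent_gap_nonneg)
  then have "ereal 0 \<le> - L" by (rule tendsto_le[OF trivial_limit_at_right_real gap_lim tendsto_const])
  then have "- L \<noteq> - \<infinity>" by auto
  have "((\<lambda>t. ereal (tangent_gap t) + ereal (deriv f 1 * (t - 1)))
      \<longlongrightarrow> - L + ereal (deriv f 1 * (0 - 1))) (at_right 0)"
    by (intro tendsto_add_ereal_nonneg[OF \<open>- L \<noteq> - \<infinity>\<close> _ gap_lim] tendsto_intros) simp
  then have lim: "((\<lambda>t. ereal (f t)) \<longlongrightarrow> - L + ereal (- deriv f 1)) (at_right 0)"
    by (simp add: tangent_gap_def)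
  then have "f_zero f = - L + ereal (- deriv f 1)"
    unfolding f_zero_def by (intro tendsto_Lim) auto
  with lim show ?thesis by simp
qed

lemma f_zero_ge:
  assumes "\<rho> < 1" and far: "\<And>t. t > 0 \<Longrightarrow> \<bar>t - 1\<bar> \<ge> \<rho> \<Longrightarrow> tangent_gap t \<ge> m"
  shows "f_zero f \<ge> ereal (m - deriv f 1)"
proof -
  have ev: "\<forall>\<^sub>F t in at_right 0. ereal (m + deriv f 1 * (t - 1)) \<le> ereal (f t)"
    unfolding eventually_at_right_field
  proof (intro exI[of _ "1 - \<rho>"] conjI allI impI)
    fix t :: real assume "0 < t" "t < 1 - \<rho>"
    then have "tangent_gap t \<ge> m" by (intro far) auto
    then show "ereal (m + deriv f 1 * (t - 1)) \<le> ereal (f t)" by (simp add: tangent_gap_def)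
  qed (use \<open>\<rho> < 1\<close> in simp)
  have "((\<lambda>t. ereal (m + deriv f 1 * (t - 1))) \<longlongrightarrow> ereal (m + deriv f 1 * (0 - 1))) (at_right 0)"
    by (intro tendsto_intros)
  from tendsto_le[OF trivial_limit_at_right_real f_tendsto_f_zero this ev] show ?thesis by simp
qed

lemma fdiv_ge_far_component:
  fixes R P :: "real^'n"
  assumes P: "\<And>i. P$i > 0" and R: "\<And>i. R$i \<ge> 0"
    and sum: "(\<Sum>i\<in>UNIV. R$i) = (\<Sum>i\<in>UNIV. P$i)"
    and "\<rho> < 1" and "m \<ge> 0" and far: "\<And>t. t > 0 \<Longrightarrow> \<bar>t - 1\<bar> \<ge> \<rho> \<Longrightarrow> tangent_gap t \<ge> m"
    and j: "\<bar>R$j / P$j - 1\<bar> \<ge> \<rho>"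
  shows "fdiv f R P \<ge> ereal (P$j * m)"
proof -
  define q where "q i = (if \<bar>R$i / P$i - 1\<bar> \<ge> \<rho> then m else 0)" for i
  have f_zero: "f_zero f \<ge> ereal (m - deriv f 1)" by (rule f_zero_ge[OF \<open>\<rho> < 1\<close> far])
  \<comment> \<open>Bound each summand of fdiv by P(i) q(i) plus a linear term; the linear terms cancel
    because R and P have equal mass.\<close>
  have term_ge: "ereal (P$i * q i + deriv f 1 * (R$i - P$i)) \<le>
      (if P$i = 0 then (if R$i = 0 then 0 else ereal (R$i) * f_star f)
       else if R$i = 0 then ereal (P$i) * f_zero f
       else ereal (P$i * f (R$i / P$i)))" for i
  proof (cases "R$i = 0")
    case True
    then have "ereal (P$i * q i + deriv f 1 * (R$i - P$i)) = ereal (P$i) * ereal (m - deriv f 1)"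
      using \<open>\<rho> < 1\<close> P[of i] by (simp add: q_def algebra_simps)
    also have "\<dots> \<le> ereal (P$i) * f_zero f"
      using f_zero P[of i] by (intro ereal_mult_left_mono) auto
    finally show ?thesis using P[of i] True by simp
  next
    case False
    then have "R$i / P$i > 0" using R[of i] P[of i] by (simp add: less_le)
    then have "q i \<le> tangent_gap (R$i / P$i)"
      using far tangent_gap_nonneg by (auto simp: q_def)
    then have "P$i * q i + deriv f 1 * (R$i - P$i) \<le> P$i * f (R$i / P$i)"
      using P[of i] mult_left_mono[of "q i" _ "P$i"]
      by (simp add: tangent_gap_def field_simps)
    then show ?thesis using P[of i] False by simp
  qed
  have "ereal (P$j * q j) \<le> ereal (\<Sum>i\<in>UNIV. P$i * q i)"
    using P \<open>m \<ge> 0\<close> by (intro ereal_less_eq(3)[THEN iffD2] member_le_sum) (auto simp: q_def less_imp_le)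
  also have "(\<Sum>i\<in>UNIV. P$i * q i) = (\<Sum>i\<in>UNIV. P$i * q i + deriv f 1 * (R$i - P$i))"
    using sum by (simp add: sum.distrib sum_subtractf sum_distrib_left[symmetric])
  also have "ereal \<dots> \<le> fdiv f R P"
    unfolding fdiv_def sum_ereal[symmetric] by (rule sum_mono) (rule term_ge)
  finally show ?thesis using j by (simp add: q_def)
qed

lemma small_fdiv_imp_ratios_near_1:
  fixes P :: "real^'n"
  assumes P: "\<And>i. P$i > 0" and "\<rho> > 0"
  obtains \<delta> where "\<delta> > 0" and "\<And>R i. (\<And>i. R$i \<ge> 0) \<Longrightarrow> (\<Sum>i\<in>UNIV. R$i) = (\<Sum>i\<in>UNIV. P$i) \<Longrightarrow>
      fdiv f R P \<le> ereal \<delta> \<Longrightarrow> \<bar>R$i / P$i - 1\<bar> < \<rho>"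
proof -
  obtain \<rho>0 where "\<rho>0 > 0" and away: "\<And>\<rho> t. 0 < \<rho> \<Longrightarrow> \<rho> < \<rho>0 \<Longrightarrow> t > 0 \<Longrightarrow> \<bar>t - 1\<bar> \<ge> \<rho> \<Longrightarrow>
      tangent_gap t \<ge> deriv (deriv f) 1 / 4 * \<rho>\<^sup>2"
    using tangent_gap_away_from_1 by blast
  define \<rho>' where "\<rho>' = min \<rho> (min (\<rho>0 / 2) (1 / 2))"
  have \<rho>': "0 < \<rho>'" "\<rho>' \<le> \<rho>" "\<rho>' < \<rho>0" "\<rho>' < 1"
    using \<open>\<rho> > 0\<close> \<open>\<rho>0 > 0\<close> by (auto simp: \<rho>'_def)
  define m where "m = deriv (deriv f) 1 / 4 * \<rho>'\<^sup>2"
  have "m > 0" using deriv2_pos \<rho>' by (simp add: m_def)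
  have far: "\<And>t. t > 0 \<Longrightarrow> \<bar>t - 1\<bar> \<ge> \<rho>' \<Longrightarrow> tangent_gap t \<ge> m"
    using away \<rho>' unfolding m_def by blast
  define p where "p = Min (range (\<lambda>i. P$i))"
  have p: "p > 0" "\<And>i. p \<le> P$i"
    using P by (auto simp: p_def)
  have "\<bar>R$i / P$i - 1\<bar> < \<rho>"
    if R: "\<And>i. R$i \<ge> 0" and sum: "(\<Sum>i\<in>UNIV. R$i) = (\<Sum>i\<in>UNIV. P$i)"
      and small: "fdiv f R P \<le> ereal (p * m / 2)" for R i
  proof (rule ccontr)
    assume "\<not> \<bar>R$i / P$i - 1\<bar> < \<rho>"
    then have "ereal (P$i * m) \<le> fdiv f R P"
      using \<rho>' \<open>m > 0\<close> by (intro fdiv_ge_far_component[OF P R sum \<open>\<rho>' < 1\<close> _ far]) auto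
    with small have "P$i * m \<le> p * m / 2" by (metis ereal_less_eq(3) order_trans)
    moreover have "p * m \<le> P$i * m" using p \<open>m > 0\<close> by simp
    ultimately show False using p(1) \<open>m > 0\<close> by simp
  qed
  moreover have "p * m / 2 > 0" using p \<open>m > 0\<close> by simp
  ultimately show ?thesis using that by blast
qed

end

section \<open>Channels and the chi-square contraction coefficient\<close>

definition column_stochastic :: "real^'x^'y \<Rightarrow> bool" where
  "column_stochastic W \<longleftrightarrow> (\<forall>x y. W$y$x \<ge> 0) \<and> (\<forall>x. (\<Sum>y\<in>UNIV. W$y$x) = 1)"

lemma column_stochastic_sum:
  assumes "column_stochastic W"
  shows "(\<Sum>y\<in>UNIV. (W *v R)$y) = (\<Sum>x\<in>UNIV. R$x)"
proof -
  have "(\<Sum>y\<in>UNIV. (W *v R)$y) = (\<Sum>x\<in>UNIV. \<Sum>y\<in>UNIV. W$y$x * R$x)"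
    unfolding matrix_vector_mult_def by simp (rule sum.swap)
  also have "\<dots> = (\<Sum>x\<in>UNIV. R$x)"
    using assms by (simp add: column_stochastic_def sum_distrib_right[symmetric])
  finally show ?thesis .
qed

lemma column_stochastic_nonneg:
  assumes "column_stochastic W" and "\<And>x. R$x \<ge> 0"
  shows "(W *v R)$y \<ge> 0"
  using assms unfolding column_stochastic_def matrix_vector_mult_def by (auto intro!: sum_nonneg)

lemma pmf_vec_column_stochastic:
  assumes "column_stochastic W" and "pmf_vec R"
  shows "pmf_vec (W *v R)"
  using assms column_stochastic_nonneg[OF assms(1)] column_stochastic_sum[OF assms(1), of R]
  by (auto simp: pmf_vec_def)

locale channel =
  fixes P :: "real^'x" and W :: "real^'x^'y"
  assumes P_pos: "\<And>x. P$x > 0" and pmf_P: "pmf_vec P"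
    and stochastic: "column_stochastic W" and WP_pos: "\<And>y. (W *v P)$y > 0"
begin

definition posterior :: "'y \<Rightarrow> 'x \<Rightarrow> real" where
  "posterior y x = W$y$x * P$x / (W *v P)$y"

definition chi2_ratio :: "real^'x \<Rightarrow> real" where
  "chi2_ratio R = chi2_form (W *v R) (W *v P) / chi2_form R P"

definition chi2_ratios :: "ereal set" where
  "chi2_ratios = {ereal (chi2_ratio R) | R. pmf_vec R \<and> chi2_form R P > 0}"

lemma posterior_nonneg: "posterior y x \<ge> 0"
  using stochastic P_pos[of x] WP_pos[of y]
  by (simp add: posterior_def column_stochastic_def less_imp_le)

lemma sum_posterior: "(\<Sum>x\<in>UNIV. posterior y x) = 1"
  using WP_pos[of y] by (simp add: posterior_def sum_divide_distrib[symmetric] matrix_vector_mult_def)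

lemma output_ratio_eq_posterior_mean:
  "(W *v R)$y / (W *v P)$y - 1 = (\<Sum>x\<in>UNIV. posterior y x * (R$x / P$x - 1))"
proof -
  have "posterior y x * (R$x / P$x - 1) = W$y$x * R$x / (W *v P)$y - posterior y x" for x
    using P_pos[of x] WP_pos[of y] by (simp add: posterior_def field_simps)
  then have "(\<Sum>x\<in>UNIV. posterior y x * (R$x / P$x - 1))
      = (\<Sum>x\<in>UNIV. W$y$x * R$x / (W *v P)$y) - (\<Sum>x\<in>UNIV. posterior y x)"
    by (simp add: sum_subtractf)
  then show ?thesis
    by (simp add: sum_posterior sum_divide_distrib[symmetric] matrix_vector_mult_def)
qed

lemma output_ratio_bound:
  assumes "\<And>x. \<bar>R$x / P$x - 1\<bar> \<le> B"
  shows "\<bar>(W *v R)$y / (W *v P)$y - 1\<bar> \<le> B"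
  unfolding output_ratio_eq_posterior_mean
  using assms posterior_nonneg sum_posterior by (intro weighted_mean_abs_le) auto

lemma chi2_form_nonneg: "chi2_form R P \<ge> 0"
  using P_pos by (auto simp: chi2_form_def less_imp_le intro!: sum_nonneg)

lemma chi2_form_output_nonneg: "chi2_form (W *v R) (W *v P) \<ge> 0"
  using WP_pos by (auto simp: chi2_form_def less_imp_le intro!: sum_nonneg)

lemma chi2_form_output_le: "chi2_form (W *v R) (W *v P) \<le> chi2_form R P"
proof -
  define u where "u x = R$x / P$x - 1" for x
  have "chi2_form (W *v R) (W *v P) \<le> (\<Sum>y\<in>UNIV. \<Sum>x\<in>UNIV. W$y$x * P$x * (u x)\<^sup>2)"
    unfolding chi2_form_def
  proof (rule sum_mono)
    fix y
    have "((W *v R)$y / (W *v P)$y - 1)\<^sup>2 \<le> (\<Sum>x\<in>UNIV. posterior y x * (u x)\<^sup>2)"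
      unfolding output_ratio_eq_posterior_mean u_def
      using posterior_nonneg sum_posterior by (intro weighted_mean_square_le) auto
    then have "(W *v P)$y * ((W *v R)$y / (W *v P)$y - 1)\<^sup>2
        \<le> (W *v P)$y * (\<Sum>x\<in>UNIV. posterior y x * (u x)\<^sup>2)"
      using WP_pos[of y] by (intro mult_left_mono) auto
    also have "\<dots> = (\<Sum>x\<in>UNIV. W$y$x * P$x * (u x)\<^sup>2)"
      unfolding sum_distrib_left posterior_def using WP_pos[of y] by (intro sum.cong) auto
    finally show "(W *v P)$y * ((W *v R)$y / (W *v P)$y - 1)\<^sup>2 \<le> (\<Sum>x\<in>UNIV. W$y$x * P$x * (u x)\<^sup>2)" .
  qed
  also have "\<dots> = (\<Sum>x\<in>UNIV. P$x * (u x)\<^sup>2 * (\<Sum>y\<in>UNIV. W$y$x))"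
    by (subst sum.swap) (simp add: sum_distrib_left ac_simps)
  also have "\<dots> = chi2_form R P"
    using stochastic by (simp add: column_stochastic_def chi2_form_def u_def)
  finally show ?thesis .
qed

lemma chi2_ratio_bounds: "0 \<le> chi2_ratio R" "chi2_ratio R \<le> 1"
  using chi2_form_nonneg[of R] chi2_form_output_nonneg[of R] chi2_form_output_le[of R]
  by (auto simp: chi2_ratio_def divide_le_eq)

lemma eta_chi2_eq_Sup_chi2_ratios:
  assumes "\<And>x. P$x < 1" and "\<And>y. (W *v P)$y < 1"
  shows "eta chi2 P W = Sup chi2_ratios"
proof -
  have chi: "fdiv chi2 R P = ereal (chi2_form R P)"
    "fdiv chi2 (W *v R) (W *v P) = ereal (chi2_form (W *v R) (W *v P))"
    if "pmf_vec R" for R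
    using that pmf_vec_column_stochastic[OF stochastic] P_pos WP_pos pmf_P
    by (auto simp: pmf_vec_def intro!: fdiv_chi2_eq_chi2_form)
  have "{fdiv chi2 (W *v R) (W *v P) / fdiv chi2 R P | R. pmf_vec R \<and> 0 < fdiv chi2 R P \<and> fdiv chi2 R P < \<infinity>}
      = chi2_ratios"
    unfolding chi2_ratios_def chi2_ratio_def by (rule Collect_cong) (force simp: chi)
  then show ?thesis using assms by (auto simp: eta_def less_le)
qed

lemma Sup_chi2_ratios_eq_ereal:
  assumes "\<And>x. P$x < 1"
  obtains \<eta> where "Sup chi2_ratios = ereal \<eta>"
proof -
  obtain x0 :: 'x where True by simp
  define R0 :: "real^'x" where "R0 = axis x0 1"
  have "pmf_vec R0" by (simp add: pmf_vec_def R0_def axis_def)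
  moreover have "chi2_form R0 P > 0"
  proof -
    have "0 < P$x0 * (R0$x0 / P$x0 - 1)\<^sup>2" using P_pos[of x0] assms[of x0] by (simp add: R0_def)
    also have "\<dots> \<le> chi2_form R0 P"
      unfolding chi2_form_def using P_pos by (intro member_le_sum) (auto simp: less_imp_le)
    finally show ?thesis .
  qed
  ultimately have "ereal (chi2_ratio R0) \<in> chi2_ratios" by (auto simp: chi2_ratios_def)
  then have "ereal (chi2_ratio R0) \<le> Sup chi2_ratios" by (rule Sup_upper)
  moreover have "0 \<le> ereal (chi2_ratio R0)" using chi2_ratio_bounds(1)[of R0] by simp
  ultimately have "0 \<le> Sup chi2_ratios" by (rule order_trans[rotated])
  moreover have "Sup chi2_ratios \<le> 1"
    using chi2_ratio_bounds(2) by (auto simp: chi2_ratios_def intro!: Sup_least)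
  ultimately show ?thesis using that by (cases "Sup chi2_ratios") auto
qed

end

section \<open>Local contraction of f-divergences\<close>

locale channel_fdiv = channel P W + fdiv_generator f
  for P :: "real^'x" and W :: "real^'x^'y" and f :: "real \<Rightarrow> real" +
  assumes P_lt_1: "\<And>x. P$x < 1"
begin

definition chi2_scale :: real where
  "chi2_scale = deriv (deriv f) 1 / 2"

definition local_ratios :: "real \<Rightarrow> ereal set" where
  "local_ratios \<delta> = {fdiv f (W *v R) (W *v P) / fdiv f R P | R.
      pmf_vec R \<and> 0 < fdiv f R P \<and> fdiv f R P \<le> ereal \<delta>}"

definition fdiv_approx_chi2 :: "real \<Rightarrow> real^'n \<Rightarrow> real^'n \<Rightarrow> bool" where
  "fdiv_approx_chi2 \<epsilon> R Q \<longleftrightarrow> (\<exists>D. fdiv f R Q = ereal D \<and>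
     \<bar>D - chi2_scale * chi2_form R Q\<bar> \<le> \<epsilon> * (chi2_scale * chi2_form R Q))"

lemma chi2_scale_pos: "chi2_scale > 0"
  using deriv2_pos by (simp add: chi2_scale_def)

lemma fdiv_pair_near_quadratic:
  assumes "\<epsilon> > 0"
  obtains \<rho> where "\<rho> > 0" and "\<And>R. pmf_vec R \<Longrightarrow> (\<And>x. \<bar>R$x / P$x - 1\<bar> < \<rho>) \<Longrightarrow>
    fdiv_approx_chi2 \<epsilon> R P \<and> fdiv_approx_chi2 \<epsilon> (W *v R) (W *v P)"
proof -
  obtain \<rho>T where "\<rho>T > 0" and taylor: "\<And>u. \<bar>u\<bar> < \<rho>T \<Longrightarrow>
      \<bar>f (1 + u) - f 1 - deriv f 1 * u - chi2_scale * u\<^sup>2\<bar> \<le> (\<epsilon> * chi2_scale) * u\<^sup>2"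
    using second_order_taylor_bound[OF differentiable_near_1 deriv_differentiable_1, of "\<epsilon> * chi2_scale"]
      assms chi2_scale_pos by (auto simp: chi2_scale_def)
  define \<rho> where "\<rho> = min \<rho>T 1"
  have \<rho>: "\<rho> > 0" "\<rho> \<le> 1" using \<open>\<rho>T > 0\<close> by (auto simp: \<rho>_def)
  have taylor_\<rho>: "\<bar>f (1 + u) - f 1 - deriv f 1 * u - chi2_scale * u\<^sup>2\<bar> \<le> (\<epsilon> * chi2_scale) * u\<^sup>2"
    if "\<bar>u\<bar> < \<rho>" for u
    using taylor that by (simp add: \<rho>_def)
  have "fdiv_approx_chi2 \<epsilon> R P \<and> fdiv_approx_chi2 \<epsilon> (W *v R) (W *v P)"
    if R: "pmf_vec R" and near: "\<And>x. \<bar>R$x / P$x - 1\<bar> < \<rho>" for R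
  proof -
    have sum_R: "(\<Sum>x\<in>UNIV. R$x) = (\<Sum>x\<in>UNIV. P$x)"
      using R pmf_P by (simp add: pmf_vec_def)
    obtain DX where DX: "fdiv f R P = ereal DX"
      "\<bar>DX - chi2_scale * chi2_form R P\<bar> \<le> (\<epsilon> * chi2_scale) * chi2_form R P"
      using fdiv_near_quadratic[OF P_pos sum_R f_1 \<rho>(2) near taylor_\<rho>] by blast
    have sum_out: "(\<Sum>y\<in>UNIV. (W *v R)$y) = (\<Sum>y\<in>UNIV. (W *v P)$y)"
      using sum_R by (simp add: column_stochastic_sum[OF stochastic])
    define B where "B = Max (range (\<lambda>x. \<bar>R$x / P$x - 1\<bar>))"
    have "B < \<rho>" using near Max_in[of "range (\<lambda>x. \<bar>R$x / P$x - 1\<bar>)"] by (auto simp: B_def)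
    have B: "\<And>x. \<bar>R$x / P$x - 1\<bar> \<le> B" unfolding B_def by (rule Max_ge) auto
    have near_out: "\<bar>(W *v R)$y / (W *v P)$y - 1\<bar> < \<rho>" for y
      using output_ratio_bound[OF B, of y] \<open>B < \<rho>\<close> by linarith
    obtain DY where DY: "fdiv f (W *v R) (W *v P) = ereal DY"
      "\<bar>DY - chi2_scale * chi2_form (W *v R) (W *v P)\<bar>
        \<le> (\<epsilon> * chi2_scale) * chi2_form (W *v R) (W *v P)"
      using fdiv_near_quadratic[OF WP_pos sum_out f_1 \<rho>(2) near_out taylor_\<rho>] by blast
    show ?thesis using DX DY by (auto simp: fdiv_approx_chi2_def ac_simps)
  qed
  with \<rho>(1) show ?thesis using that by blast
qed

lemma local_ratio_le_chi2_ratio: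
  assumes \<epsilon>: "0 < \<epsilon>" "\<epsilon> \<le> 1/2"
  obtains \<delta>0 where "\<delta>0 > 0" and "\<And>\<delta> e. \<delta> \<le> \<delta>0 \<Longrightarrow> e \<in> local_ratios \<delta> \<Longrightarrow>
    \<exists>R. pmf_vec R \<and> chi2_form R P > 0 \<and> e \<le> ereal ((1 + 4 * \<epsilon>) * chi2_ratio R)"
proof -
  obtain \<rho> where "\<rho> > 0" and approx: "\<And>R. pmf_vec R \<Longrightarrow> (\<And>x. \<bar>R$x / P$x - 1\<bar> < \<rho>) \<Longrightarrow>
    fdiv_approx_chi2 \<epsilon> R P \<and> fdiv_approx_chi2 \<epsilon> (W *v R) (W *v P)"
    using fdiv_pair_near_quadratic[OF \<epsilon>(1)] by blast
  obtain \<delta>0 where "\<delta>0 > 0" and small: "\<And>R x. (\<And>x. R$x \<ge> 0) \<Longrightarrow>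
      (\<Sum>x\<in>UNIV. R$x) = (\<Sum>x\<in>UNIV. P$x) \<Longrightarrow> fdiv f R P \<le> ereal \<delta>0 \<Longrightarrow> \<bar>R$x / P$x - 1\<bar> < \<rho>"
    using small_fdiv_imp_ratios_near_1[OF P_pos \<open>\<rho> > 0\<close>] by blast
  have "\<exists>R. pmf_vec R \<and> chi2_form R P > 0 \<and> e \<le> ereal ((1 + 4 * \<epsilon>) * chi2_ratio R)"
    if "\<delta> \<le> \<delta>0" "e \<in> local_ratios \<delta>" for \<delta> e
  proof -
    obtain R where R: "pmf_vec R" "0 < fdiv f R P" "fdiv f R P \<le> ereal \<delta>"
      and e: "e = fdiv f (W *v R) (W *v P) / fdiv f R P"
      using \<open>e \<in> local_ratios \<delta>\<close> by (auto simp: local_ratios_def)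
    have "fdiv f R P \<le> ereal \<delta>0" using R(3) \<open>\<delta> \<le> \<delta>0\<close> by (simp add: order_trans)
    then have "\<bar>R$x / P$x - 1\<bar> < \<rho>" for x
      using R(1) pmf_P by (intro small) (auto simp: pmf_vec_def)
    then obtain DX DY where D: "fdiv f R P = ereal DX" "fdiv f (W *v R) (W *v P) = ereal DY"
      "\<bar>DX - chi2_scale * chi2_form R P\<bar> \<le> \<epsilon> * (chi2_scale * chi2_form R P)"
      "\<bar>DY - chi2_scale * chi2_form (W *v R) (W *v P)\<bar>
        \<le> \<epsilon> * (chi2_scale * chi2_form (W *v R) (W *v P))"
      using approx[OF R(1)] unfolding fdiv_approx_chi2_def by blast
    have "DX > 0" using R(2) D(1) by simp
    have "chi2_form R P > 0"
    proof (rule ccontr)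
      assume "\<not> chi2_form R P > 0"
      then have "chi2_form R P = 0" using chi2_form_nonneg[of R] by simp
      then show False using D(3) \<open>DX > 0\<close> by simp
    qed
    then have "DY / DX \<le> (1 + 4 * \<epsilon>) * chi2_ratio R"
      using quotient_bounds_of_relative_errors(2)[OF \<epsilon> chi2_scale_pos _ chi2_form_output_nonneg D(3,4)]
      by (simp add: chi2_ratio_def)
    then show ?thesis using R(1) \<open>chi2_form R P > 0\<close> e D(1,2) \<open>DX > 0\<close> by auto
  qed
  with \<open>\<delta>0 > 0\<close> show ?thesis using that by blast
qed

lemma local_ratio_ge_mixture:
  assumes R0: "pmf_vec R0" "chi2_form R0 P > 0" and \<epsilon>: "0 < \<epsilon>" "\<epsilon> \<le> 1/2" and "\<delta> > 0"
  obtains e where "e \<in> local_ratios \<delta>" and "ereal ((1 - 2 * \<epsilon>) * chi2_ratio R0) \<le> e"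
proof -
  \<comment> \<open>Moving R0 towards P along the segment rescales both chi-square forms by t^2, keeping their ratio.\<close>
  define R where "R t = P + t *\<^sub>R (R0 - P)" for t
  have WR: "W *v R t = W *v P + t *\<^sub>R (W *v R0 - W *v P)" for t
    by (simp add: R_def algebra_simps)
  have P_ne: "P$x \<noteq> 0" for x using P_pos[of x] by simp
  have WP_ne: "(W *v P)$y \<noteq> 0" for y using WP_pos[of y] by simp
  obtain \<rho> where "\<rho> > 0" and approx: "\<And>R. pmf_vec R \<Longrightarrow> (\<And>x. \<bar>R$x / P$x - 1\<bar> < \<rho>) \<Longrightarrow>
    fdiv_approx_chi2 \<epsilon> R P \<and> fdiv_approx_chi2 \<epsilon> (W *v R) (W *v P)"
    using fdiv_pair_near_quadratic[OF \<epsilon>(1)] by blast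
  define K where "K = (1 + \<epsilon>) * chi2_scale * chi2_form R0 P"
  obtain t where t: "0 < t" "t \<le> 1" "\<And>x. t * \<bar>R0$x / P$x - 1\<bar> < \<rho>" "K * t\<^sup>2 < \<delta>"
    by (rule small_scale_exists[OF \<open>\<rho> > 0\<close> \<open>\<delta> > 0\<close>, where c = "\<lambda>x. \<bar>R0$x / P$x - 1\<bar>" and K = K]) blast
  have "pmf_vec (R t)" using pmf_vec_mix[OF pmf_P R0(1)] t by (simp add: R_def)
  moreover have "\<bar>(R t)$x / P$x - 1\<bar> < \<rho>" for x
    unfolding R_def ratio_mix[OF P_ne] using t(3)[of x] t(1) by (simp add: abs_mult)
  ultimately obtain DX DY where D: "fdiv f (R t) P = ereal DX" "fdiv f (W *v R t) (W *v P) = ereal DY"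
      "\<bar>DX - chi2_scale * chi2_form (R t) P\<bar> \<le> \<epsilon> * (chi2_scale * chi2_form (R t) P)"
      "\<bar>DY - chi2_scale * chi2_form (W *v R t) (W *v P)\<bar>
        \<le> \<epsilon> * (chi2_scale * chi2_form (W *v R t) (W *v P))"
    using approx unfolding fdiv_approx_chi2_def by blast
  have X: "chi2_form (R t) P = t\<^sup>2 * chi2_form R0 P"
    unfolding R_def by (rule chi2_form_mix[OF P_ne])
  have Y: "chi2_form (W *v R t) (W *v P) = t\<^sup>2 * chi2_form (W *v R0) (W *v P)"
    unfolding WR by (rule chi2_form_mix[OF WP_ne])
  have pos: "chi2_form (R t) P > 0" using X t(1) R0(2) by simp
  note bounds = quotient_bounds_of_relative_errors[OF \<epsilon> chi2_scale_pos pos chi2_form_output_nonneg D(3,4)]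
  have "DX \<le> K * t\<^sup>2"
    using D(3) by (simp add: X K_def abs_le_iff algebra_simps)
  then have "fdiv f (R t) P \<le> ereal \<delta>" using D(1) t(4) by simp
  then have "ereal (DY / DX) \<in> local_ratios \<delta>"
    unfolding local_ratios_def using \<open>pmf_vec (R t)\<close> D(1,2) bounds(1)
    by (intro CollectI exI[of _ "R t"]) auto
  moreover have "chi2_form (W *v R t) (W *v P) / chi2_form (R t) P = chi2_ratio R0"
    using t(1) by (simp add: X Y chi2_ratio_def)
  then have "(1 - 2 * \<epsilon>) * chi2_ratio R0 \<le> DY / DX" using bounds(3) by simp
  ultimately show ?thesis using that by auto
qed

lemma less_Sup_local_ratios:
  assumes "b < Sup chi2_ratios" and "\<delta> > 0"
  shows "b < Sup (local_ratios \<delta>)"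
proof -
  obtain R0 where R0: "pmf_vec R0" "chi2_form R0 P > 0" and "b < ereal (chi2_ratio R0)"
    using assms(1) by (auto simp: chi2_ratios_def less_Sup_iff)
  then obtain z where z: "b < ereal z" "z < chi2_ratio R0" using ereal_dense2 by force
  define \<epsilon> where "\<epsilon> = min (1/2) ((chi2_ratio R0 - z) / 4)"
  have \<epsilon>: "0 < \<epsilon>" "\<epsilon> \<le> 1/2" using z by (auto simp: \<epsilon>_def)
  obtain e where e: "e \<in> local_ratios \<delta>" "ereal ((1 - 2 * \<epsilon>) * chi2_ratio R0) \<le> e"
    using local_ratio_ge_mixture[OF R0 \<epsilon> \<open>\<delta> > 0\<close>] by blast
  have "2 * \<epsilon> * chi2_ratio R0 \<le> 2 * \<epsilon>"
    using chi2_ratio_bounds[of R0] \<epsilon> by (simp add: mult_left_le_one_le)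
  moreover have "\<epsilon> \<le> (chi2_ratio R0 - z) / 4" unfolding \<epsilon>_def by (rule min.cobounded2)
  then have "2 * \<epsilon> < chi2_ratio R0 - z" using z(2) by (simp add: field_simps)
  moreover have "(1 - 2 * \<epsilon>) * chi2_ratio R0 = chi2_ratio R0 - 2 * \<epsilon> * chi2_ratio R0"
    by (simp add: left_diff_distrib)
  ultimately have "z < (1 - 2 * \<epsilon>) * chi2_ratio R0" by linarith
  have "b < ereal z" by (rule z(1))
  also have "\<dots> < ereal ((1 - 2 * \<epsilon>) * chi2_ratio R0)" using \<open>z < (1 - 2 * \<epsilon>) * _\<close> by simp
  also have "\<dots> \<le> e" by (rule e(2))
  also have "\<dots> \<le> Sup (local_ratios \<delta>)" using e(1) by (rule Sup_upper)
  finally show ?thesis .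
qed

lemma eventually_Sup_local_ratios_less:
  assumes "Sup chi2_ratios < b"
  shows "\<forall>\<^sub>F \<delta> in at_right 0. Sup (local_ratios \<delta>) < b"
proof -
  obtain \<eta> where \<eta>: "Sup chi2_ratios = ereal \<eta>"
    using Sup_chi2_ratios_eq_ereal[OF P_lt_1] by blast
  obtain z where z: "\<eta> < z" "ereal z < b" using assms \<eta> ereal_dense2 by force
  define \<epsilon> where "\<epsilon> = min (1/2) ((z - \<eta>) / 8)"
  have \<epsilon>: "0 < \<epsilon>" "\<epsilon> \<le> 1/2" using z by (auto simp: \<epsilon>_def)
  obtain \<delta>0 where "\<delta>0 > 0" and le: "\<And>\<delta> e. \<delta> \<le> \<delta>0 \<Longrightarrow> e \<in> local_ratios \<delta> \<Longrightarrow>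
      \<exists>R. pmf_vec R \<and> chi2_form R P > 0 \<and> e \<le> ereal ((1 + 4 * \<epsilon>) * chi2_ratio R)"
    using local_ratio_le_chi2_ratio[OF \<epsilon>] by blast
  have "Sup (local_ratios \<delta>) \<le> ereal (\<eta> + 4 * \<epsilon>)" if \<delta>: "\<delta> \<le> \<delta>0" for \<delta>
  proof (rule Sup_least)
    fix e assume "e \<in> local_ratios \<delta>"
    then obtain R where R: "pmf_vec R" "chi2_form R P > 0"
      and e: "e \<le> ereal ((1 + 4 * \<epsilon>) * chi2_ratio R)" using le[OF \<delta>] by blast
    have "ereal (chi2_ratio R) \<le> ereal \<eta>"
      unfolding \<eta>[symmetric] using R by (auto simp: chi2_ratios_def intro!: Sup_upper)
    moreover have "\<epsilon> * chi2_ratio R \<le> \<epsilon>"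
      using chi2_ratio_bounds[of R] \<epsilon> by (simp add: mult_right_le_one_le)
    ultimately have "(1 + 4 * \<epsilon>) * chi2_ratio R \<le> \<eta> + 4 * \<epsilon>" by (simp add: algebra_simps)
    then show "e \<le> ereal (\<eta> + 4 * \<epsilon>)" using e by (simp add: order_trans)
  qed
  moreover have "\<epsilon> \<le> (z - \<eta>) / 8" unfolding \<epsilon>_def by (rule min.cobounded2)
  then have "ereal (\<eta> + 4 * \<epsilon>) < ereal z" using z(1) by simp
  then have "ereal (\<eta> + 4 * \<epsilon>) < b" using z(2) by (rule less_trans)
  ultimately have "Sup (local_ratios \<delta>) < b" if "\<delta> \<le> \<delta>0" for \<delta>
    using that by (blast intro: le_less_trans)
  then show ?thesis
    unfolding eventually_at_right_field using \<open>\<delta>0 > 0\<close> by (intro exI[of _ \<delta>0]) auto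
qed

lemma Sup_local_ratios_tendsto: "((\<lambda>\<delta>. Sup (local_ratios \<delta>)) \<longlongrightarrow> Sup chi2_ratios) (at_right 0)"
proof (rule order_tendstoI)
  show "\<forall>\<^sub>F \<delta> in at_right 0. b < Sup (local_ratios \<delta>)" if "b < Sup chi2_ratios" for b
    unfolding eventually_at_right_field using less_Sup_local_ratios[OF that] by (intro exI[of _ 1]) auto
qed (rule eventually_Sup_local_ratios_less)

end

theorem theorem1:
  fixes P :: "real^'x" and W :: "real^'x^'y" and f :: "real \<Rightarrow> real"
  assumes "CARD('x) \<ge> 2" and "CARD('y) \<ge> 2"
    and "pmf_vec P" and "\<forall>x. P$x > 0"
    and "\<forall>x y. W$y$x \<ge> 0" and "\<forall>x. (\<Sum>y\<in>UNIV. W$y$x) = 1"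
    and "\<forall>y. (W *v P)$y > 0"
    and "convex_on {0<..} f" and "strictly_convex_at_1 f"
    and "\<exists>e>0. \<forall>t. \<bar>t - 1\<bar> < e \<longrightarrow> f differentiable (at t)"
    and "deriv f differentiable (at 1)"
    and "f 1 = 0" and "deriv (deriv f) 1 > 0"
  shows "((\<lambda>\<delta>. Sup {fdiv f (W *v R) (W *v P) / fdiv f R P | R.
                    pmf_vec R \<and> 0 < fdiv f R P \<and> fdiv f R P \<le> ereal \<delta>})
          \<longlongrightarrow> eta chi2 P W) (at_right 0)"
proof -
  have sum_P: "(\<Sum>x\<in>UNIV. P$x) = 1" using assms(3) by (simp add: pmf_vec_def)
  have stochastic: "column_stochastic W" using assms(5,6) by (simp add: column_stochastic_def)
  have P_lt_1: "P$x < 1" for x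
    using pos_component_less_one[OF assms(1)] assms(4) sum_P by blast
  have WP_lt_1: "(W *v P)$y < 1" for y
    using pos_component_less_one[OF assms(2)] assms(7) sum_P
    by (simp add: column_stochastic_sum[OF stochastic])
  interpret channel_fdiv P W f
    using assms stochastic P_lt_1 by unfold_locales auto
  have "eta chi2 P W = Sup chi2_ratios"
    using P_lt_1 WP_lt_1 by (rule eta_chi2_eq_Sup_chi2_ratios)
  then show ?thesis using Sup_local_ratios_tendsto by (simp add: local_ratios_def)
qed


end
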